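(* Let $X$ and $Y$ be 2-dimensional non-positively curved piecewise Euclidean complexes and let $Z$ be a 1-dimensional complex which is a subcomplex of both $X$ and $Y$. If $Z$ is ultra-convex in $X$ (or in $Y$), then the space $X\sqcup_Z Y$ obtained by gluing $X$ and $Y$ along $Z$ is also a 2-dimensional non-positively curved complex.
   Context: A 2-dimensional piecewise Euclidean complex is non-positively curved if the link of every vertex contains no closed loop of length less than $2\pi$ (in the angular metric). For a non-positively curved piecewise Euclidean 2-complex $X$ and a 1-dimensional subcomplex $Y$, $Y$ is ultra-convex in $X$ if for every vertex $v\in Y$, any two points of $\mathrm{Lk}(v,Y)$ are at distance at least $2\pi$ in $\mathrm{Lk}(v,X)$. *)

theory Defs
  imports "HOL-Analysis.Analysis"
begin

text \<open>
  Every face is a convex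
  Euclidean polygon (given by its corner points in the complex plane, listed
  counterclockwise), attached along a closed edge path: side k of the polygon
  goes from corner k to corner k+1 and is glued isometrically to the oriented
  edge  bdry f ! k  (True = traversed from src to tgt).
\<close>

record ('v,'e,'f) pe2 =
  verts :: "'v set"
  edges :: "'e set"
  faces :: "'f set"
  src   :: "'e \<Rightarrow> 'v"
  tgt   :: "'e \<Rightarrow> 'v"
  len   :: "'e \<Rightarrow> real"
  bdry  :: "'f \<Rightarrow> ('e \<times> bool) list"
  shape :: "'f \<Rightarrow> complex list"

definition otail :: "('v,'e,'f,'z) pe2_scheme \<Rightarrow> 'e \<times> bool \<Rightarrow> 'v" where
  "otail X s = (if snd s then src X (fst s) else tgt X (fst s))"

definition ohead :: "('v,'e,'f,'z) pe2_scheme \<Rightarrow> 'e \<times> bool \<Rightarrow> 'v" where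
  "ohead X s = (if snd s then tgt X (fst s) else src X (fst s))"

definition turn :: "complex list \<Rightarrow> nat \<Rightarrow> real" where
  "turn ps k = (let n = length ps in
     Arg ((ps ! (Suc k mod n) - ps ! k) / (ps ! k - ps ! ((k + n - 1) mod n))))"

definition convex_polygon :: "complex list \<Rightarrow> bool" where
  "convex_polygon ps \<longleftrightarrow> length ps \<ge> 3 \<and>
     (\<forall>k < length ps. 0 < turn ps k \<and> turn ps k < pi) \<and>
     (\<Sum>k < length ps. turn ps k) = 2 * pi"

definition corner_angle :: "('v,'e,'f,'z) pe2_scheme \<Rightarrow> 'f \<Rightarrow> nat \<Rightarrow> real" where
  "corner_angle X f k = pi - turn (shape X f) k"

definition pe2_complex :: "('v,'e,'f,'z) pe2_scheme \<Rightarrow> bool" where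
  "pe2_complex X \<longleftrightarrow>
     faces X \<noteq> {} \<and>
     (\<forall>e \<in> edges X. src X e \<in> verts X \<and> tgt X e \<in> verts X \<and> len X e > 0) \<and>
     (\<forall>f \<in> faces X. let bs = bdry X f; ps = shape X f; n = length bs in
        length ps = n \<and> convex_polygon ps \<and>
        (\<forall>k < n. fst (bs ! k) \<in> edges X \<and>
                 ohead X (bs ! k) = otail X (bs ! (Suc k mod n)) \<and>
                 cmod (ps ! (Suc k mod n) - ps ! k) = len X (fst (bs ! k))))"

text \<open>Its vertices are the edge-ends
  at v (e, True) = source end, (e, False) = target end; its edges are the
  corners (f, k) of faces at v, of length the corner angle.\<close>

definition link_verts :: "('v,'e,'f,'z) pe2_scheme \<Rightarrow> 'v \<Rightarrow> ('e \<times> bool) set" where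
  "link_verts X v = {(e, b). e \<in> edges X \<and> (if b then src X e else tgt X e) = v}"

definition link_edges :: "('v,'e,'f,'z) pe2_scheme \<Rightarrow> 'v \<Rightarrow> ('f \<times> nat) set" where
  "link_edges X v = {(f, k). f \<in> faces X \<and> k < length (bdry X f) \<and> otail X (bdry X f ! k) = v}"

text \<open>The two endpoints of the link edge (f,k): the end of the arriving side k-1
  and the end of the departing side k.\<close>
definition link_ends :: "('v,'e,'f,'z) pe2_scheme \<Rightarrow> 'f \<times> nat \<Rightarrow> ('e \<times> bool) \<times> ('e \<times> bool)" where
  "link_ends X c = (case c of (f, k) \<Rightarrow>
     (let bs = bdry X f; n = length bs; a = bs ! ((k + n - 1) mod n) in
       ((fst a, \<not> snd a), bs ! k)))"

definition link_len :: "('v,'e,'f,'z) pe2_scheme \<Rightarrow> 'f \<times> nat \<Rightarrow> real" where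
  "link_len X c = (case c of (f, k) \<Rightarrow> corner_angle X f k)"

definition joins :: "('v,'e,'f,'z) pe2_scheme \<Rightarrow> 'f \<times> nat \<Rightarrow> 'e \<times> bool \<Rightarrow> 'e \<times> bool \<Rightarrow> bool" where
  "joins X c x y \<longleftrightarrow> link_ends X c = (x, y) \<or> link_ends X c = (y, x)"

definition link_walk :: "('v,'e,'f,'z) pe2_scheme \<Rightarrow> 'v \<Rightarrow> ('e \<times> bool) list \<Rightarrow> ('f \<times> nat) list \<Rightarrow> bool" where
  "link_walk X v ws cs \<longleftrightarrow> length ws = Suc (length cs) \<and>
     set ws \<subseteq> link_verts X v \<and> set cs \<subseteq> link_edges X v \<and>
     (\<forall>i < length cs. joins X (cs ! i) (ws ! i) (ws ! Suc i))"

definition link_cycle :: "('v,'e,'f,'z) pe2_scheme \<Rightarrow> 'v \<Rightarrow> ('e \<times> bool) list \<Rightarrow> ('f \<times> nat) list \<Rightarrow> bool" where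
  "link_cycle X v ws cs \<longleftrightarrow> cs \<noteq> [] \<and> length ws = length cs \<and>
     distinct ws \<and> distinct cs \<and>
     set ws \<subseteq> link_verts X v \<and> set cs \<subseteq> link_edges X v \<and>
     (\<forall>i < length cs. joins X (cs ! i) (ws ! i) (ws ! (Suc i mod length cs)))"

definition link_length :: "('v,'e,'f,'z) pe2_scheme \<Rightarrow> ('f \<times> nat) list \<Rightarrow> real" where
  "link_length X cs = sum_list (map (link_len X) cs)"

definition npc :: "('v,'e,'f,'z) pe2_scheme \<Rightarrow> bool" where
  "npc X \<longleftrightarrow> pe2_complex X \<and>
     (\<forall>v \<in> verts X. \<forall>ws cs. link_cycle X v ws cs \<longrightarrow> link_length X cs \<ge> 2 * pi)"

definition subcomplex1 :: "('v,'e,'f,'z) pe2_scheme \<Rightarrow> 'v set \<Rightarrow> 'e set \<Rightarrow> bool" where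
  "subcomplex1 X ZV ZE \<longleftrightarrow> ZV \<subseteq> verts X \<and> ZE \<subseteq> edges X \<and>
     (\<forall>e \<in> ZE. src X e \<in> ZV \<and> tgt X e \<in> ZV)"

definition sub_link :: "('v,'e,'f,'z) pe2_scheme \<Rightarrow> 'e set \<Rightarrow> 'v \<Rightarrow> ('e \<times> bool) set" where
  "sub_link X ZE v = {(e, b). e \<in> ZE \<and> (if b then src X e else tgt X e) = v}"

text \<open>Ultra-convexity: distinct points of Lk(v,Z) are at distance at least 2 pi
  in the path metric of Lk(v,X), i.e. every link walk joining them has length
  at least 2 pi.\<close>
definition ultra_convex :: "('v,'e,'f,'z) pe2_scheme \<Rightarrow> 'v set \<Rightarrow> 'e set \<Rightarrow> bool" where
  "ultra_convex X ZV ZE \<longleftrightarrow>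
     (\<forall>v \<in> ZV. \<forall>a \<in> sub_link X ZE v. \<forall>b \<in> sub_link X ZE v. a \<noteq> b \<longrightarrow>
        (\<forall>ws cs. link_walk X v ws cs \<and> hd ws = a \<and> last ws = b \<longrightarrow> link_length X cs \<ge> 2 * pi))"

text \<open>Gluing: X and Y are taken to intersect exactly in the common subcomplex Z
  (with compatible data there); the glued complex is then the union.\<close>
definition glue :: "('v,'e,'f) pe2 \<Rightarrow> ('v,'e,'f) pe2 \<Rightarrow> ('v,'e,'f) pe2" where
  "glue X Y = \<lparr> verts = verts X \<union> verts Y,
                edges = edges X \<union> edges Y,
                faces = faces X \<union> faces Y,
                src = (\<lambda>e. if e \<in> edges X then src X e else src Y e),
                tgt = (\<lambda>e. if e \<in> edges X then tgt X e else tgt Y e),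
                len = (\<lambda>e. if e \<in> edges X then len X e else len Y e),
                bdry = (\<lambda>f. if f \<in> faces X then bdry X f else bdry Y f),
                shape = (\<lambda>f. if f \<in> faces X then shape X f else shape Y f) \<rparr>"

end

theory Submission
  imports Defs
begin

text \<open>
  A loop in the link of a vertex of the glued complex either consists of corners of one
  piece only, and then is long because that piece is non-positively curved, or it passes
  from corners of X to corners of Y.  In the second case take a maximal arc of the loop
  made of corners of the ultra-convex piece: its two end points are edge-ends shared by
  both pieces, hence edge-ends of Z at v, and they are distinct because the loop is
  embedded.  Ultra-convexity makes this arc alone at least 2 pi long.
\<close>

lemma sum_list_rotate: "sum_list (rotate n xs) = sum_list (xs :: 'a::comm_monoid_add list)"
  by (metis add.commute append_take_drop_id rotate_drop_take sum_list_append)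

lemma ex_rotate_hd_last:
  assumes "\<exists>x \<in> set xs. P x" "\<exists>x \<in> set xs. \<not> P x"
  shows "\<exists>k. P (hd (rotate k xs)) \<and> \<not> P (last (rotate k xs))"
proof -
  let ?n = "length xs"
  obtain p q where pq: "p < ?n" "P (xs ! p)" "q < ?n" "\<not> P (xs ! q)"
    using assms by (metis in_set_conv_nth)
  then have n: "0 < ?n" by linarith
  have "\<exists>i < ?n. \<not> P (xs ! i) \<and> P (xs ! (Suc i mod ?n))"
    \<comment> \<open>otherwise \<open>\<not> P\<close> would spread from q around the whole cycle, reaching p\<close>
  proof (rule ccontr)
    assume "\<not> ?thesis"
    then have "\<not> P (xs ! ((q + m) mod ?n))" for m
    proof (induction m)
      case (Suc m)
      have "(q + m) mod ?n < ?n" using n by simp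
      then show ?case
        using Suc by (metis add_Suc_right mod_Suc_eq)
    qed (use pq in simp)
    moreover have "(q + (p + ?n - q)) mod ?n = p"
      using pq(1,3) by simp
    ultimately show False using pq(2) by metis
  qed
  then obtain i where i: "i < ?n" "\<not> P (xs ! i)" "P (xs ! (Suc i mod ?n))"
    by blast
  have "hd (rotate (Suc i) xs) = xs ! (Suc i mod ?n)"
    using n by (simp add: hd_rotate_conv_nth del: rotate_Suc)
  moreover have "last (rotate (Suc i) xs) = xs ! i"
  proof -
    have "last (rotate (Suc i) xs) = xs ! ((Suc i + (?n - 1)) mod ?n)"
      using n by (simp add: last_conv_nth nth_rotate del: rotate_Suc)
    also have "Suc i + (?n - 1) = i + ?n"
      using n by linarith
    also have "xs ! ((i + ?n) mod ?n) = xs ! i"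
      using i(1) by simp
    finally show ?thesis .
  qed
  ultimately show ?thesis
    using i by metis
qed

lemma obtain_first_exit:
  assumes "xs \<noteq> []" "P (hd xs)" "\<not> P (last xs)"
  obtains j where "0 < j" "j < length xs" "\<not> P (xs ! j)" "\<forall>x \<in> set (take j xs). P x"
proof -
  define j where "j = (LEAST j. \<not> P (xs ! j))"
  have "\<not> P (xs ! (length xs - 1))"
    using assms(1,3) by (simp add: last_conv_nth)
  then have "j \<le> length xs - 1" and out: "\<not> P (xs ! j)"
    unfolding j_def by (rule Least_le, rule LeastI)
  then have "j < length xs"
    using assms(1) by (metis One_nat_def Suc_pred le_imp_less_Suc length_greater_0_conv)
  moreover have "0 < j"
    using assms(1,2) out by (metis gr0I hd_conv_nth)
  moreover have "P (xs ! i)" if "i < j" for i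
    using not_less_Least[of i "\<lambda>j. \<not> P (xs ! j)"] that unfolding j_def by blast
  then have "\<forall>x \<in> set (take j xs). P x"
    by (metis in_set_conv_nth length_take min_less_iff_conj nth_take)
  ultimately show thesis
    using that out by blast
qed

definition pe2_subcomplex :: "('v,'e,'f,'z) pe2_scheme \<Rightarrow> ('v,'e,'f,'w) pe2_scheme \<Rightarrow> bool" where
  "pe2_subcomplex A G \<longleftrightarrow>
     verts A \<subseteq> verts G \<and> edges A \<subseteq> edges G \<and> faces A \<subseteq> faces G \<and>
     (\<forall>e \<in> edges A. src G e = src A e \<and> tgt G e = tgt A e \<and> len G e = len A e) \<and>
     (\<forall>f \<in> faces A. bdry G f = bdry A f \<and> shape G f = shape A f)"

definition face_attached :: "('v,'e,'f,'z) pe2_scheme \<Rightarrow> 'f \<Rightarrow> bool" where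
  "face_attached X f \<longleftrightarrow>
     (let bs = bdry X f; ps = shape X f; n = length bs in
        length ps = n \<and> convex_polygon ps \<and>
        (\<forall>k < n. fst (bs ! k) \<in> edges X \<and>
                 ohead X (bs ! k) = otail X (bs ! (Suc k mod n)) \<and>
                 cmod (ps ! (Suc k mod n) - ps ! k) = len X (fst (bs ! k))))"

lemma pe2_complex_iff:
  "pe2_complex X \<longleftrightarrow>
     faces X \<noteq> {} \<and>
     (\<forall>e \<in> edges X. src X e \<in> verts X \<and> tgt X e \<in> verts X \<and> len X e > 0) \<and>
     (\<forall>f \<in> faces X. face_attached X f)"
  unfolding pe2_complex_def face_attached_def ..

lemma otail_ohead_subcomplex:
  assumes "pe2_subcomplex A G" "fst s \<in> edges A"
  shows "otail G s = otail A s" "ohead G s = ohead A s"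
  using assms unfolding pe2_subcomplex_def otail_def ohead_def by auto

lemma face_attached_subcomplex:
  assumes sub: "pe2_subcomplex A G" and f: "f \<in> faces A" and att: "face_attached A f"
  shows "face_attached G f"
proof -
  let ?bs = "bdry A f"
  have bs: "bdry G f = ?bs" "shape G f = shape A f" and edges: "edges A \<subseteq> edges G"
    using sub f unfolding pe2_subcomplex_def by auto
  have side: "fst (?bs ! k) \<in> edges A" if "k < length ?bs" for k
    using att that unfolding face_attached_def Let_def by auto
  have "Suc k mod length ?bs < length ?bs" if "k < length ?bs" for k
    using that by (meson le_less_trans mod_less_divisor zero_le)
  then have "otail G (?bs ! (Suc k mod length ?bs)) = otail A (?bs ! (Suc k mod length ?bs))"
    if "k < length ?bs" for k
    using otail_ohead_subcomplex(1)[OF sub side] that by blast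
  moreover have "len G (fst (?bs ! k)) = len A (fst (?bs ! k))" if "k < length ?bs" for k
    using sub side[OF that] unfolding pe2_subcomplex_def by auto
  ultimately show ?thesis
    using att bs edges side otail_ohead_subcomplex(2)[OF sub side]
    unfolding face_attached_def Let_def by auto
qed

lemma edge_ends_subcomplex:
  assumes "pe2_complex A" "pe2_subcomplex A G" "e \<in> edges A"
  shows "src G e \<in> verts G \<and> tgt G e \<in> verts G \<and> len G e > 0"
  using assms unfolding pe2_complex_iff pe2_subcomplex_def by auto

lemma pe2_complex_union:
  assumes A: "pe2_complex A" "pe2_subcomplex A G" and B: "pe2_complex B" "pe2_subcomplex B G"
    and "edges G \<subseteq> edges A \<union> edges B" "faces G \<subseteq> faces A \<union> faces B"
  shows "pe2_complex G"
  unfolding pe2_complex_iff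
proof (intro conjI)
  show "faces G \<noteq> {}"
    using A unfolding pe2_complex_iff pe2_subcomplex_def by blast
  show "\<forall>e \<in> edges G. src G e \<in> verts G \<and> tgt G e \<in> verts G \<and> len G e > 0"
    using edge_ends_subcomplex[OF A] edge_ends_subcomplex[OF B] assms(5) by blast
  show "\<forall>f \<in> faces G. face_attached G f"
    using face_attached_subcomplex[OF A(2)] face_attached_subcomplex[OF B(2)] A(1) B(1) assms(6)
    unfolding pe2_complex_iff by blast
qed

lemma link_ends_edges:
  assumes "pe2_complex A" "c \<in> link_edges A v"
  shows "fst (fst (link_ends A c)) \<in> edges A" "fst (snd (link_ends A c)) \<in> edges A"
proof -
  obtain f k where c: "c = (f, k)" "f \<in> faces A" "k < length (bdry A f)"
    using assms(2) unfolding link_edges_def by auto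
  let ?n = "length (bdry A f)"
  have side: "fst (bdry A f ! i) \<in> edges A" if "i < ?n" for i
    using assms(1) c(2) that unfolding pe2_complex_iff face_attached_def Let_def by auto
  have "(k + ?n - 1) mod ?n < ?n"
    using c(3) by (meson le_less_trans mod_less_divisor zero_le)
  then show "fst (fst (link_ends A c)) \<in> edges A" "fst (snd (link_ends A c)) \<in> edges A"
    using side c(1,3) unfolding link_ends_def Let_def by auto
qed

lemma joins_edges:
  assumes "pe2_complex A" "c \<in> link_edges A v" "joins A c x y"
  shows "fst x \<in> edges A" "fst y \<in> edges A"
  using link_ends_edges[OF assms(1,2)] assms(3) unfolding joins_def by auto

lemma link_edges_face: "c \<in> link_edges A v \<Longrightarrow> fst c \<in> faces A"
  unfolding link_edges_def by auto

lemma link_len_pos: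
  assumes "pe2_complex A" "c \<in> link_edges A v"
  shows "0 < link_len A c"
proof -
  obtain f k where c: "c = (f, k)" "f \<in> faces A" "k < length (bdry A f)"
    using assms(2) unfolding link_edges_def by auto
  then have "convex_polygon (shape A f)" "length (shape A f) = length (bdry A f)"
    using assms(1) unfolding pe2_complex_iff face_attached_def Let_def by auto
  then have "turn (shape A f) k < pi"
    using c(3) unfolding convex_polygon_def by auto
  then show ?thesis
    using c(1) unfolding link_len_def corner_angle_def by simp
qed

lemma link_edges_vertex:
  assumes "pe2_complex A" "c \<in> link_edges A v"
  shows "v \<in> verts A"
proof -
  obtain f k where c: "f \<in> faces A" "k < length (bdry A f)" "otail A (bdry A f ! k) = v"
    using assms(2) unfolding link_edges_def by auto
  then have "fst (bdry A f ! k) \<in> edges A"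
    using assms(1) unfolding pe2_complex_iff face_attached_def Let_def by auto
  then show ?thesis
    using assms(1) c(3) unfolding pe2_complex_iff otail_def by (auto split: if_splits)
qed

lemma link_len_joins_subcomplex:
  assumes "pe2_subcomplex A G" "fst c \<in> faces A"
  shows "link_len G c = link_len A c" "joins G c = joins A c"
  using assms unfolding pe2_subcomplex_def link_len_def corner_angle_def link_ends_def joins_def
  by (auto split: prod.split)

lemma link_edges_subcomplex:
  assumes "pe2_complex A" "pe2_subcomplex A G" "fst c \<in> faces A"
  shows "c \<in> link_edges G v \<longleftrightarrow> c \<in> link_edges A v"
proof -
  obtain f k where c: "c = (f, k)" "f \<in> faces A"
    using assms(3) by (cases c) auto
  have "fst (bdry A f ! k) \<in> edges A" if "k < length (bdry A f)"
    using assms(1) c(2) that unfolding pe2_complex_iff face_attached_def Let_def by auto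
  then have "otail G (bdry A f ! k) = otail A (bdry A f ! k)" if "k < length (bdry A f)"
    using otail_ohead_subcomplex(1)[OF assms(2)] that by blast
  moreover have "bdry G f = bdry A f" "f \<in> faces G"
    using assms(2) c(2) unfolding pe2_subcomplex_def by auto
  ultimately show ?thesis
    using c unfolding link_edges_def by auto
qed

lemma link_verts_subcomplex:
  assumes "pe2_subcomplex A G" "fst x \<in> edges A"
  shows "x \<in> link_verts G v \<longleftrightarrow> x \<in> link_verts A v"
  using assms unfolding pe2_subcomplex_def link_verts_def by (cases x) auto

lemma joins_edges_subcomplex:
  assumes A: "pe2_complex A" "pe2_subcomplex A G" and c: "c \<in> link_edges G v" "fst c \<in> faces A"
    and "joins G c x y"
  shows "fst x \<in> edges A" "fst y \<in> edges A"
proof -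
  have "c \<in> link_edges A v"
    using link_edges_subcomplex[OF A c(2)] c(1) by (rule iffD1)
  moreover have "joins A c x y"
    using link_len_joins_subcomplex(2)[OF A(2) c(2)] assms(5) by metis
  ultimately show "fst x \<in> edges A" "fst y \<in> edges A"
    using joins_edges[OF A(1)] by blast+
qed

lemma joins_commute: "joins X c x y \<longleftrightarrow> joins X c y x"
  unfolding joins_def by blast

lemma link_length_subcomplex:
  assumes "pe2_subcomplex A G" "\<forall>c \<in> set cs. fst c \<in> faces A"
  shows "link_length G cs = link_length A cs"
  using link_len_joins_subcomplex(1)[OF assms(1)] assms(2) unfolding link_length_def
  by (metis map_eq_conv)

lemma link_corner_subcomplex:
  assumes A: "pe2_complex A" "pe2_subcomplex A G" and c: "fst c \<in> faces A" "c \<in> link_edges G v"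
    and G: "joins G c x y" "x \<in> link_verts G v" "y \<in> link_verts G v"
  shows "c \<in> link_edges A v" "joins A c x y" "x \<in> link_verts A v" "y \<in> link_verts A v"
proof -
  show "c \<in> link_edges A v"
    using link_edges_subcomplex[OF A c(1)] c(2) by (rule iffD1)
  show "joins A c x y"
    using link_len_joins_subcomplex(2)[OF A(2) c(1)] G(1) by metis
  show "x \<in> link_verts A v"
    using link_verts_subcomplex[OF A(2) joins_edges_subcomplex(1)[OF A c(2,1) G(1)]] G(2)
    by (rule iffD1)
  show "y \<in> link_verts A v"
    using link_verts_subcomplex[OF A(2) joins_edges_subcomplex(2)[OF A c(2,1) G(1)]] G(3)
    by (rule iffD1)
qed

lemma link_cycle_subcomplex:
  assumes A: "pe2_complex A" "pe2_subcomplex A G"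
    and cyc: "link_cycle G v ws cs" and in_A: "\<forall>c \<in> set cs. fst c \<in> faces A"
  shows "link_cycle A v ws cs"
proof -
  let ?n = "length cs"
  have len: "length ws = ?n" and ws_G: "set ws \<subseteq> link_verts G v"
    and cs_G: "set cs \<subseteq> link_edges G v"
    and joins_G: "\<forall>i < ?n. joins G (cs ! i) (ws ! i) (ws ! (Suc i mod ?n))"
    using cyc unfolding link_cycle_def by auto
  have corner: "cs ! i \<in> link_edges A v \<and> joins A (cs ! i) (ws ! i) (ws ! (Suc i mod ?n)) \<and>
      ws ! i \<in> link_verts A v" if "i < ?n" for i
  proof -
    have "Suc i mod ?n < length ws"
      using len that by (metis le_less_trans mod_less_divisor zero_le)
    then have "ws ! i \<in> link_verts G v" "ws ! (Suc i mod ?n) \<in> link_verts G v"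
      using ws_G len that by (auto dest: nth_mem)
    moreover have "cs ! i \<in> link_edges G v" "fst (cs ! i) \<in> faces A"
      using cs_G in_A that by auto
    ultimately show ?thesis
      using link_corner_subcomplex[OF A] joins_G that by blast
  qed
  have "set ws \<subseteq> link_verts A v"
    using corner len by (metis in_set_conv_nth subsetI)
  moreover have "set cs \<subseteq> link_edges A v"
    using corner by (metis in_set_conv_nth subsetI)
  ultimately show ?thesis
    using cyc corner unfolding link_cycle_def by blast
qed

lemma link_walk_subcomplex:
  assumes A: "pe2_complex A" "pe2_subcomplex A G"
    and walk: "link_walk G v ws cs" "cs \<noteq> []" and in_A: "\<forall>c \<in> set cs. fst c \<in> faces A"
  shows "link_walk A v ws cs"
proof -
  have len: "length ws = Suc (length cs)" and ws_G: "set ws \<subseteq> link_verts G v"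
    and cs_G: "set cs \<subseteq> link_edges G v"
    and joins_G: "\<forall>i < length cs. joins G (cs ! i) (ws ! i) (ws ! Suc i)"
    using walk unfolding link_walk_def by auto
  have corner: "cs ! i \<in> link_edges A v \<and> joins A (cs ! i) (ws ! i) (ws ! Suc i) \<and>
      ws ! i \<in> link_verts A v \<and> ws ! Suc i \<in> link_verts A v" if "i < length cs" for i
  proof -
    have "ws ! i \<in> link_verts G v" "ws ! Suc i \<in> link_verts G v"
      using ws_G len that by (auto dest: nth_mem)
    moreover have "cs ! i \<in> link_edges G v" "fst (cs ! i) \<in> faces A"
      using cs_G in_A that by auto
    ultimately show ?thesis
      using link_corner_subcomplex[OF A] joins_G that by blast
  qed
  have "ws ! i \<in> link_verts A v" if "i < length ws" for i
  proof (cases "i < length cs")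
    case True
    then show ?thesis using corner by blast
  next
    case False
    then have "i = Suc (length cs - 1)" "length cs - 1 < length cs"
      using walk(2) len that by auto
    then show ?thesis using corner by metis
  qed
  then have "set ws \<subseteq> link_verts A v"
    by (metis in_set_conv_nth subsetI)
  moreover have "set cs \<subseteq> link_edges A v"
    using corner by (metis in_set_conv_nth subsetI)
  ultimately show ?thesis
    using len corner unfolding link_walk_def by blast
qed

lemma link_cycle_length_npc_subcomplex:
  assumes npc: "npc A" and sub: "pe2_subcomplex A G"
    and cyc: "link_cycle G v ws cs" and in_A: "\<forall>c \<in> set cs. fst c \<in> faces A"
  shows "2 * pi \<le> link_length G cs"
proof -
  have A: "pe2_complex A" using npc unfolding npc_def by simp
  have cyc_A: "link_cycle A v ws cs"
    using link_cycle_subcomplex[OF A sub cyc in_A] .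
  then have "hd cs \<in> link_edges A v"
    unfolding link_cycle_def by (meson hd_in_set subsetD)
  then have "v \<in> verts A"
    by (rule link_edges_vertex[OF A])
  then have "2 * pi \<le> link_length A cs"
    using npc cyc_A unfolding npc_def by blast
  then show ?thesis
    using link_length_subcomplex[OF sub in_A] by simp
qed

lemma link_cycle_rotate:
  assumes cyc: "link_cycle G v ws cs"
  shows "link_cycle G v (rotate k ws) (rotate k cs)"
    "link_length G (rotate k cs) = link_length G cs"
proof -
  let ?n = "length cs"
  have len: "length ws = ?n"
    and joins: "\<forall>i < ?n. joins G (cs ! i) (ws ! i) (ws ! (Suc i mod ?n))"
    using cyc unfolding link_cycle_def by auto
  have "joins G (rotate k cs ! i) (rotate k ws ! i) (rotate k ws ! (Suc i mod ?n))"
    if "i < ?n" for i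
  proof -
    have "(k + Suc i mod ?n) mod ?n = Suc ((k + i) mod ?n) mod ?n"
      by (simp add: mod_add_right_eq mod_Suc_eq)
    moreover have "0 < ?n"
      using that by linarith
    ultimately show ?thesis
      using joins len that by (simp add: nth_rotate)
  qed
  then show "link_cycle G v (rotate k ws) (rotate k cs)"
    using cyc unfolding link_cycle_def by simp
  show "link_length G (rotate k cs) = link_length G cs"
    unfolding link_length_def rotate_map[symmetric] by (rule sum_list_rotate)
qed

lemma link_cycle_take_walk:
  assumes cyc: "link_cycle G v ws cs" and j: "j < length cs"
  shows "link_walk G v (take (Suc j) ws) (take j cs)"
proof -
  have "joins G (cs ! i) (ws ! i) (ws ! Suc i)" if "i < j" for i
  proof -
    have "Suc i mod length cs = Suc i"
      using j that by simp
    then show ?thesis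
      using cyc j that unfolding link_cycle_def by (metis less_trans)
  qed
  then show ?thesis
    using cyc j unfolding link_cycle_def link_walk_def
    by (auto dest: in_set_takeD)
qed

lemma link_length_take_le:
  assumes "pe2_complex G" "set cs \<subseteq> link_edges G v"
  shows "link_length G (take j cs) \<le> link_length G cs"
proof -
  have "0 \<le> link_length G (drop j cs)"
    unfolding link_length_def using assms link_len_pos
    by (force intro: sum_list_nonneg dest: set_drop_subset[THEN subsetD])
  then show ?thesis
    unfolding link_length_def
    by (metis append_take_drop_id le_add_same_cancel1 map_append sum_list_append)
qed

lemma link_verts_sub_link:
  assumes "subcomplex1 A ZV ZE" "x \<in> link_verts A v" "fst x \<in> ZE"
  shows "x \<in> sub_link A ZE v" "v \<in> ZV"
  using assms unfolding subcomplex1_def link_verts_def sub_link_def by (auto split: if_splits)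

lemma sub_link_if_joins_outside:
  assumes B: "pe2_complex B" "pe2_subcomplex B G" and faces: "faces G \<subseteq> faces A \<union> faces B"
    and shared: "edges A \<inter> edges B \<subseteq> ZE" and Z: "subcomplex1 A ZV ZE"
    and x: "x \<in> link_verts A v" and c: "c \<in> link_edges G v" "fst c \<notin> faces A"
    and "joins G c x y"
  shows "x \<in> sub_link A ZE v" "v \<in> ZV"
proof -
  have "fst c \<in> faces B"
    using faces c link_edges_face[OF c(1)] by blast
  then have "fst x \<in> edges B"
    using joins_edges_subcomplex(1)[OF B c(1)] assms(9) by blast
  moreover have "fst x \<in> edges A"
    using x unfolding link_verts_def by auto
  ultimately show "x \<in> sub_link A ZE v" "v \<in> ZV"
    using link_verts_sub_link[OF Z x] shared by blast+
qed

lemma link_cycle_crossing_length: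
  assumes G: "pe2_complex G"
    and A: "pe2_complex A" "pe2_subcomplex A G" and B: "pe2_complex B" "pe2_subcomplex B G"
    and faces: "faces G \<subseteq> faces A \<union> faces B" and shared: "edges A \<inter> edges B \<subseteq> ZE"
    and Z: "subcomplex1 A ZV ZE" "ultra_convex A ZV ZE"
    and cyc: "link_cycle G v ws cs"
    and enter: "fst (hd cs) \<in> faces A" and leave: "fst (last cs) \<notin> faces A"
  shows "2 * pi \<le> link_length G cs"
proof -
  let ?n = "length cs"
  have n: "cs \<noteq> []" "?n - 1 < ?n" and len: "length ws = ?n" and dist: "distinct ws"
    and cs_G: "set cs \<subseteq> link_edges G v"
    and joins: "\<forall>i < ?n. joins G (cs ! i) (ws ! i) (ws ! (Suc i mod ?n))"
    using cyc unfolding link_cycle_def by auto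
  obtain j where j: "0 < j" "j < ?n" "fst (cs ! j) \<notin> faces A"
    and arc_in_A: "\<forall>c \<in> set (take j cs). fst c \<in> faces A"
    using obtain_first_exit[of cs "\<lambda>c. fst c \<in> faces A"] n(1) enter leave by blast
  have arc: "link_walk A v (take (Suc j) ws) (take j cs)"
    using link_walk_subcomplex[OF A link_cycle_take_walk[OF cyc j(2)]] arc_in_A j(1) n(1)
    by simp
  have arc_hd: "hd (take (Suc j) ws) = ws ! 0"
    using len n(1) by (metis hd_conv_nth hd_take length_0_conv zero_less_Suc)
  have arc_last: "last (take (Suc j) ws) = ws ! j"
    using j(2) len by (simp add: take_Suc_conv_app_nth)
  have "take (Suc j) ws \<noteq> []"
    using len n(1) by (metis length_0_conv take_eq_Nil2 nat.distinct(1))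
  then have ends_A: "ws ! 0 \<in> link_verts A v" "ws ! j \<in> link_verts A v"
    using arc arc_hd arc_last unfolding link_walk_def by (metis hd_in_set last_in_set subsetD)+
  have "Suc (?n - 1) mod ?n = 0"
    using n(1) by simp
  then have "joins G (cs ! (?n - 1)) (ws ! 0) (ws ! (?n - 1))"
    using joins n(2) joins_commute by metis
  moreover have "fst (cs ! (?n - 1)) \<notin> faces A"
    using leave n(1) by (simp add: last_conv_nth)
  ultimately have "ws ! 0 \<in> sub_link A ZE v" "v \<in> ZV"
    using sub_link_if_joins_outside[OF B faces shared Z(1) ends_A(1)] cs_G n(2)
    by (meson nth_mem subsetD)+
  moreover have "ws ! j \<in> sub_link A ZE v"
    using sub_link_if_joins_outside[OF B faces shared Z(1) ends_A(2)] cs_G j(2,3) joins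
    by (meson nth_mem subsetD)
  moreover have "ws ! 0 \<noteq> ws ! j"
    using dist len j(1,2) n(1) nth_eq_iff_index_eq[of ws 0 j] by simp
  ultimately have "2 * pi \<le> link_length A (take j cs)"
    using Z(2) arc arc_hd arc_last unfolding ultra_convex_def by metis
  also have "\<dots> = link_length G (take j cs)"
    using link_length_subcomplex[OF A(2) arc_in_A] by simp
  also have "\<dots> \<le> link_length G cs"
    using link_length_take_le[OF G cs_G] .
  finally show ?thesis .
qed

lemma npc_union:
  assumes A: "npc A" "pe2_subcomplex A G" and B: "npc B" "pe2_subcomplex B G"
    and cover: "edges G \<subseteq> edges A \<union> edges B" "faces G \<subseteq> faces A \<union> faces B"
    and shared: "edges A \<inter> edges B \<subseteq> ZE"
    and Z: "subcomplex1 A ZV ZE" "ultra_convex A ZV ZE"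
  shows "npc G"
proof -
  have pA: "pe2_complex A" and pB: "pe2_complex B"
    using A(1) B(1) unfolding npc_def by simp_all
  have pG: "pe2_complex G"
    using pe2_complex_union[OF pA A(2) pB B(2) cover] .
  have "2 * pi \<le> link_length G cs" if cyc: "link_cycle G v ws cs" for v ws cs
  proof -
    have "set cs \<subseteq> link_edges G v"
      using cyc unfolding link_cycle_def by simp
    then have in_AB: "fst c \<in> faces A \<union> faces B" if "c \<in> set cs" for c
      using cover(2) link_edges_face that by (meson subsetD)
    consider "\<forall>c \<in> set cs. fst c \<in> faces A" | "\<forall>c \<in> set cs. fst c \<in> faces B"
      | "\<exists>c \<in> set cs. fst c \<in> faces A" "\<exists>c \<in> set cs. fst c \<notin> faces A"
      using in_AB by blast
    then show ?thesis
    proof cases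
      case 1
      then show ?thesis by (rule link_cycle_length_npc_subcomplex[OF A cyc])
    next
      case 2
      then show ?thesis by (rule link_cycle_length_npc_subcomplex[OF B cyc])
    next
      case 3
      then obtain k where "fst (hd (rotate k cs)) \<in> faces A" "fst (last (rotate k cs)) \<notin> faces A"
        using ex_rotate_hd_last[of cs "\<lambda>c. fst c \<in> faces A"] by blast
      with link_cycle_crossing_length[OF pG pA A(2) pB B(2) cover(2) shared Z
          link_cycle_rotate(1)[OF cyc]]
      show ?thesis
        using link_cycle_rotate(2)[OF cyc] by simp
    qed
  qed
  then show ?thesis
    using pG unfolding npc_def by blast
qed

lemma glue_subcomplex_left: "pe2_subcomplex X (glue X Y)"
  unfolding pe2_subcomplex_def glue_def by simp

lemma glue_subcomplex_right:
  assumes "\<forall>e \<in> edges X \<inter> edges Y. src X e = src Y e \<and> tgt X e = tgt Y e \<and> len X e = len Y e"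
    and "faces X \<inter> faces Y = {}"
  shows "pe2_subcomplex Y (glue X Y)"
  using assms unfolding pe2_subcomplex_def glue_def by auto

theorem lemma7p9:
  fixes X Y :: "('v,'e,'f) pe2" and ZV :: "'v set" and ZE :: "'e set"
  assumes "npc X" and "npc Y"
    and "subcomplex1 X ZV ZE" and "subcomplex1 Y ZV ZE"
    and "\<forall>e \<in> ZE. src X e = src Y e \<and> tgt X e = tgt Y e \<and> len X e = len Y e"
    and "verts X \<inter> verts Y = ZV" and "edges X \<inter> edges Y = ZE" and "faces X \<inter> faces Y = {}"
    and "ultra_convex X ZV ZE \<or> ultra_convex Y ZV ZE"
  shows "npc (glue X Y)"
proof -
  have X: "pe2_subcomplex X (glue X Y)"
    by (rule glue_subcomplex_left)
  have Y: "pe2_subcomplex Y (glue X Y)"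
    using glue_subcomplex_right assms(5,7,8) by blast
  have edges: "edges (glue X Y) \<subseteq> edges X \<union> edges Y" "edges (glue X Y) \<subseteq> edges Y \<union> edges X"
    and faces: "faces (glue X Y) \<subseteq> faces X \<union> faces Y" "faces (glue X Y) \<subseteq> faces Y \<union> faces X"
    and shared: "edges X \<inter> edges Y \<subseteq> ZE" "edges Y \<inter> edges X \<subseteq> ZE"
    using assms(7) unfolding glue_def by auto
  from assms(9) show ?thesis
  proof
    assume "ultra_convex X ZV ZE"
    with npc_union[OF assms(1) X assms(2) Y edges(1) faces(1) shared(1) assms(3)] show ?thesis .
  next
    assume "ultra_convex Y ZV ZE"
    with npc_union[OF assms(2) Y assms(1) X edges(2) faces(2) shared(2) assms(4)] show ?thesis .
  qed
qed

end
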